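(* Let $m,n\ge2$ be integers and let $H$ be the graph on the vertex set $\{x_{i,j}: i\in[m], j\in[n]\}$ with edge set $\{\{x_{i,j},x_{i',j+1}\}: 1\le i<i'\le m,\ 1\le j\le n-1\}$. Then \[\operatorname{match}(H)=(m-1)\left\lfloor\tfrac n2\right\rfloor+\left\lfloor\tfrac{n-1}2\right\rfloor.\]
   Context: $\operatorname{match}(H)$ is the maximum size of a matching (set of pairwise disjoint edges) in $H$. *)

theory Defs
  imports Main
begin

definition is_matching :: "'a set set \<Rightarrow> 'a set set \<Rightarrow> bool" where
  "is_matching E M \<longleftrightarrow> M \<subseteq> E \<and> (\<forall>e\<in>M. \<forall>f\<in>M. e \<noteq> f \<longrightarrow> e \<inter> f = {})"

(* match(H): maximum size of a matching in H (E assumed finite) *)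
definition match_num :: "'a set set \<Rightarrow> nat" where
  "match_num E = Max {card M | M. is_matching E M}"

(* The graph H of Lemma 4.1: vertices x_{i,j} = (i,j), i in [m], j in [n] *)
definition H_vertices :: "nat \<Rightarrow> nat \<Rightarrow> (nat \<times> nat) set" where
  "H_vertices m n = {1..m} \<times> {1..n}"

definition H_edges :: "nat \<Rightarrow> nat \<Rightarrow> (nat \<times> nat) set set" where
  "H_edges m n = {{(i, j), (i', j + 1)} | i i' j.
      1 \<le> i \<and> i < i' \<and> i' \<le> m \<and> 1 \<le> j \<and> j \<le> n - 1}"

end

theory Submission
  imports Defs "HOL-Library.Disjoint_Sets"
begin

(* Every edge joins two consecutive columns, so it has one end in an odd and one in an even
   column.  Hence the vertices in even columns form a vertex cover, and so do the vertices in
   odd columns other than x_{m,1}, which is never the odd-column end of an edge; a matching is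
   no larger than a vertex cover, and the smaller of the two covers has the claimed size.
   Conversely, the diagonal edges x_{i,2t+1} x_{i+1,2t+2} (i < m) only use vertices x_{i,j}
   with i < m for odd j and i > 1 for even j, so they can be completed by the return edges
   x_{1,2t+2} x_{m,2t+3} to a matching of the claimed size. *)

lemma is_matching_iff_disjoint: "is_matching E M \<longleftrightarrow> M \<subseteq> E \<and> disjoint M"
  by (simp add: is_matching_def disjoint_def)

lemma card_matching_le_cover:
  assumes "is_matching E M" and "finite C" and "\<And>e. e \<in> E \<Longrightarrow> e \<inter> C \<noteq> {}"
  shows "card M \<le> card C"
proof -
  define pick where "pick e = (SOME v. v \<in> e \<inter> C)" for e :: "'a set"
  have pick: "pick e \<in> e \<inter> C" if "e \<in> M" for e
  proof -
    have "e \<in> E"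
      using assms(1) that by (auto simp: is_matching_def)
    then have "\<exists>v. v \<in> e \<inter> C"
      using assms(3) by blast
    then show ?thesis
      unfolding pick_def by (rule someI_ex)
  qed
  have "inj_on pick M"
  proof (rule inj_onI)
    fix e f assume "e \<in> M" "f \<in> M" "pick e = pick f"
    then have "e \<inter> f \<noteq> {}"
      using pick by (metis IntD1 disjoint_iff)
    with \<open>e \<in> M\<close> \<open>f \<in> M\<close> show "e = f"
      using assms(1) by (auto simp: is_matching_def)
  qed
  moreover have "pick ` M \<subseteq> C"
    using pick by blast
  ultimately show ?thesis
    using assms(2) by (rule card_inj_on_le)
qed

lemma match_num_eqI:
  assumes "\<And>M. is_matching E M \<Longrightarrow> card M \<le> k" and "is_matching E M\<^sub>0" and "card M\<^sub>0 = k"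
  shows "match_num E = k"
  unfolding match_num_def
proof (rule Max_eqI)
  have "{card M |M. is_matching E M} \<subseteq> {..k}"
    using assms(1) by blast
  then show "finite {card M |M. is_matching E M}"
    by (rule finite_subset) simp
  show "y \<le> k" if "y \<in> {card M |M. is_matching E M}" for y
    using that assms(1) by blast
  show "k \<in> {card M |M. is_matching E M}"
    using assms(2,3) by blast
qed

lemma card_image_disjoint_family_on:
  assumes "disjoint_family_on A I" and "\<And>i. i \<in> I \<Longrightarrow> A i \<noteq> {}"
  shows "card (A ` I) = card I"
  using assms by (simp add: card_image disjoint_family_on_iff_disjoint_image)

lemma card_even_atLeastAtMost: "card {j \<in> {1..n}. even j} = n div 2"
proof (induction n)
  case (Suc n)
  have "{j \<in> {1..Suc n}. even j} = {j \<in> {1..n}. even j} \<union> (if even (Suc n) then {Suc n} else {})"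
    by (auto simp: le_Suc_eq)
  with Suc show ?case by (auto simp: card_insert_if)
qed simp

lemma card_odd_atLeastAtMost: "card {j \<in> {1..n}. odd j} = (n + 1) div 2"
proof (induction n)
  case (Suc n)
  have "{j \<in> {1..Suc n}. odd j} = {j \<in> {1..n}. odd j} \<union> (if odd (Suc n) then {Suc n} else {})"
    by (auto simp: le_Suc_eq)
  with Suc show ?case by (auto simp: card_insert_if)
qed simp

lemma H_edgesI:
  "1 \<le> i \<Longrightarrow> i < i' \<Longrightarrow> i' \<le> m \<Longrightarrow> 1 \<le> j \<Longrightarrow> j < n \<Longrightarrow> {(i, j), (i', j + 1)} \<in> H_edges m n"
  unfolding H_edges_def by force

lemma H_edgesE:
  assumes "e \<in> H_edges m n"
  obtains i i' j where "e = {(i, j), (i', j + 1)}" "1 \<le> i" "i < i'" "i' \<le> m" "1 \<le> j" "j < n"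
  using assms unfolding H_edges_def by force

lemma H_edge_meets_even_columns:
  "e \<in> H_edges m n \<Longrightarrow> e \<inter> ({1..m} \<times> {j \<in> {1..n}. even j}) \<noteq> {}"
  by (erule H_edgesE) (auto split: if_splits)

lemma H_edge_meets_odd_columns:
  "e \<in> H_edges m n \<Longrightarrow> e \<inter> ({1..m} \<times> {j \<in> {1..n}. odd j} - {(m, 1)}) \<noteq> {}"
  by (erule H_edgesE) auto

lemma card_matching_H_edges_le:
  assumes "is_matching (H_edges m n) M"
  shows "card M \<le> (m - 1) * (n div 2) + (n - 1) div 2"
proof (cases "even n")
  case True
  let ?C = "{1..m} \<times> {j \<in> {1..n}. odd j} - {(m, 1)}"
  have "card M \<le> card ?C"
    by (rule card_matching_le_cover[OF assms _ H_edge_meets_odd_columns]) simp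
  also have "card ?C = card ({1..m} \<times> {j \<in> {1..n}. odd j}) - 1"
  proof (cases "m = 0 \<or> n = 0")
    case True
    then have no_columns: "{1..m} \<times> {j \<in> {1..n}. odd j} = {}" by auto
    show ?thesis unfolding no_columns by simp
  next
    case False
    then have "(m, 1) \<in> {1..m} \<times> {j \<in> {1..n}. odd j}" by auto
    then show ?thesis by (rule card_Diff_singleton)
  qed
  also have "\<dots> = m * ((n + 1) div 2) - 1"
    by (simp only: card_cartesian_product card_odd_atLeastAtMost card_atLeastAtMost) simp
  also have "\<dots> \<le> (m - 1) * (n div 2) + (n - 1) div 2"
    using True by (cases m) (auto elim!: evenE)
  finally show ?thesis .
next
  case False
  let ?C = "{1..m} \<times> {j \<in> {1..n}. even j}"
  have "card M \<le> card ?C"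
    by (rule card_matching_le_cover[OF assms _ H_edge_meets_even_columns]) simp
  also have "card ?C = m * (n div 2)"
    by (simp only: card_cartesian_product card_even_atLeastAtMost card_atLeastAtMost) simp
  also have "\<dots> \<le> (m - 1) * (n div 2) + (n - 1) div 2"
    using False by (cases m) (auto elim!: oddE)
  finally show ?thesis .
qed

definition diagonal_edges :: "nat \<Rightarrow> nat \<Rightarrow> (nat \<times> nat) set set" where
  "diagonal_edges m n = (\<lambda>(i, t). {(i, 2*t + 1), (i + 1, 2*t + 2)}) ` ({1..<m} \<times> {..<n div 2})"

definition return_edges :: "nat \<Rightarrow> nat \<Rightarrow> (nat \<times> nat) set set" where
  "return_edges m n = (\<lambda>t. {(1, 2*t + 2), (m, 2*t + 3)}) ` {..<(n - 1) div 2}"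

definition staircase_matching :: "nat \<Rightarrow> nat \<Rightarrow> (nat \<times> nat) set set" where
  "staircase_matching m n = diagonal_edges m n \<union> return_edges m n"

lemma disjoint_family_on_diagonal_edges:
  "disjoint_family_on (\<lambda>(i, t). {(i, 2*t + 1), (i + 1, 2*t + 2)}) (I :: (nat \<times> nat) set)"
  unfolding disjoint_family_on_def by auto presburger+

lemma disjoint_family_on_return_edges:
  "disjoint_family_on (\<lambda>t. {(1, 2*t + 2), (m, 2*t + 3)}) (I :: nat set)"
  unfolding disjoint_family_on_def by auto

lemma card_diagonal_edges: "card (diagonal_edges m n) = (m - 1) * (n div 2)"
  unfolding diagonal_edges_def
  by (subst card_image_disjoint_family_on[OF disjoint_family_on_diagonal_edges])
     (auto simp: card_cartesian_product)

lemma card_return_edges: "card (return_edges m n) = (n - 1) div 2"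
  unfolding return_edges_def
  by (subst card_image_disjoint_family_on[OF disjoint_family_on_return_edges]) auto

lemma Union_diagonal_edges_disjoint_return_edges:
  "\<Union> (diagonal_edges m n) \<inter> \<Union> (return_edges m n) = {}"
proof -
  have "\<Union> (diagonal_edges m n) \<subseteq> {(i, j). odd j \<and> i < m \<or> even j \<and> 1 < i}"
    unfolding diagonal_edges_def by auto
  moreover have "\<Union> (return_edges m n) \<subseteq> {(i, j). even j \<and> i = 1 \<or> odd j \<and> i = m}"
    unfolding return_edges_def by auto
  ultimately show ?thesis by auto
qed

lemma staircase_matching_subset_H_edges:
  assumes "2 \<le> m"
  shows "staircase_matching m n \<subseteq> H_edges m n"
proof -
  have "{(i, 2*t + 1), (i + 1, 2*t + 1 + 1)} \<in> H_edges m n" if "1 \<le> i" "i < m" "t < n div 2" for i t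
    using that by (intro H_edgesI) auto
  moreover have "{(1, 2*t + 2), (m, 2*t + 2 + 1)} \<in> H_edges m n" if "t < (n - 1) div 2" for t
    using that assms by (intro H_edgesI) auto
  ultimately show ?thesis
    unfolding staircase_matching_def diagonal_edges_def return_edges_def
    by (auto simp: numeral_eq_Suc)
qed

lemma is_matching_staircase_matching:
  assumes "2 \<le> m"
  shows "is_matching (H_edges m n) (staircase_matching m n)"
  unfolding is_matching_iff_disjoint staircase_matching_def
proof
  show "diagonal_edges m n \<union> return_edges m n \<subseteq> H_edges m n"
    using staircase_matching_subset_H_edges[OF assms] by (simp add: staircase_matching_def)
  show "disjoint (diagonal_edges m n \<union> return_edges m n)"
    using Union_diagonal_edges_disjoint_return_edges
    unfolding diagonal_edges_def return_edges_def
    by (intro disjoint_union disjoint_family_on_disjoint_image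
        disjoint_family_on_diagonal_edges disjoint_family_on_return_edges)
qed

lemma card_staircase_matching:
  "card (staircase_matching m n) = (m - 1) * (n div 2) + (n - 1) div 2"
proof -
  have "diagonal_edges m n \<inter> return_edges m n = {}"
  proof (rule equals0I)
    fix e assume e: "e \<in> diagonal_edges m n \<inter> return_edges m n"
    then have "e = {}"
      using Union_diagonal_edges_disjoint_return_edges[of m n] by blast
    with e show False
      by (auto simp: diagonal_edges_def)
  qed
  moreover have "finite (diagonal_edges m n)" "finite (return_edges m n)"
    by (simp_all add: diagonal_edges_def return_edges_def)
  ultimately show ?thesis
    by (simp add: staircase_matching_def card_Un_disjoint card_diagonal_edges card_return_edges)
qed

theorem lemma4p1:
  fixes m n :: nat
  assumes "m \<ge> 2" and "n \<ge> 2"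
  shows "match_num (H_edges m n) = (m - 1) * (n div 2) + (n - 1) div 2"
proof (rule match_num_eqI)
  show "card M \<le> (m - 1) * (n div 2) + (n - 1) div 2" if "is_matching (H_edges m n) M" for M
    using that by (rule card_matching_H_edges_le)
  show "is_matching (H_edges m n) (staircase_matching m n)"
    using assms(1) by (rule is_matching_staircase_matching)
  show "card (staircase_matching m n) = (m - 1) * (n div 2) + (n - 1) div 2"
    by (rule card_staircase_matching)
qed

end
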